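(* Let $\{\mathcal{N}_t\}_{t=1}^h$ be a time series of power network descriptions as in the context, sharing the same private line conductances $\mathbf{g}\in\mathbb{R}^n$ and susceptances $\mathbf{b}\in\mathbb{R}^n$. Fix $\alpha>0$, $\epsilon>0$, $\beta>0$, $\lambda>0$. Then the Multi-step Power Lines Obfuscation (MPLO) mechanism described in the context, viewed as a randomized algorithm mapping the private line-parameter data to the released network descriptions $\{\dot{\mathcal{N}}_t\}_{t=1}^h$, is $\epsilon$-differentially private with respect to the $\alpha$-indistinguishability adjacency relation.
   Context: Each $\mathcal{N}_t$ ($t=1,\dots,h$) has the same buses $N$, the same $n$ directed lines $E$ (with reversals $E^R$), the same line admittances $Y_{ij}=g_{ij}+\mathbf{i}b_{ij}$, and the same public bounds (voltage bounds $v^l_i,v^u_i$, generator bounds $S^{gl}_i,S^{gu}_i$, angle limits $\theta^\Delta_{ij}$, thermal limits $s^u_{ij}$, cost coefficients $c_{0i},c_{1i},c_{2i}$, slack bus $s$), but time-dependent public demands $S^d_i(t)$; $O^*(t)>0$ is the public optimal AC-OPF cost of $\mathcal{N}_t$. The ratio vector $\mathbf r=(r_{ij})$ and the partition of lines by voltage level ($E(v)$, $n_v=|E(v)|$, each line in exactly one $E(v)$) are public. $\mathrm{cost}(S^g_i)=c_{2i}(\Re S^g_i)^2+c_{1i}\Re S^g_i+c_{0i}$. $\mathrm{Lap}(\lambda')$ has density $\frac{1}{2\lambda'}e^{-|x|/\lambda'}$. Differential privacy: private datasets (line-parameter vectors) $D\sim_\alpha D'$ if they differ in a single coordinate by at most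 $\alpha$ and agree elsewhere; $\mathcal{A}$ is $\epsilon$-DP if $\Pr[\mathcal{A}(D)\in O]\le e^\epsilon\Pr[\mathcal{A}(D')\in O]$ for all such $D,D'$ and measurable $O$. MPLO mechanism (independent noise): 1. $\tilde{\mathbf g}=\mathbf g+\mathrm{Lap}(3\alpha/\epsilon)^n$; 2. $\tilde b_{ij}=r_{ij}\tilde g_{ij}$; 3. for each voltage level $v$: $\tilde\mu^v_{\mathbf g}=\frac1{n_v}\sum_{E(v)}g_{ij}+\mathrm{Lap}(3\alpha/(n_v\epsilon))$, $\tilde\mu^v_{\mathbf b}=\frac1{n_v}\sum_{E(v)}b_{ij}+\mathrm{Lap}(3\alpha/(n_v\epsilon))$; 4. solve (selecting a solution by any fixed rule), with variables $\dot Y_{ij}=\dot g_{ij}+\mathbf i\dot b_{ij}$ and, for each $t$, $S^g_i(t),V_i(t),S_{ij}(t)$: minimize $\|\dot{\mathbf g}-\tilde{\mathbf g}\|_2^2+\|\dot{\mathbf b}-\tilde{\mathbf b}\|_2^2$ subject to $\tilde\mu^v_{\mathbf g}/\lambda\le\dot g_{ij}\le\lambda\tilde\mu^v_{\mathbf g}$ and $\tilde\mu^v_{\mathbf b}/\lambda\le\dot b_{ij}\le\lambda\tilde\mu^v_{\mathbf b}$ for lines at level $v$, and for every $t$: $\frac{|\sum_i\mathrm{cost}(S^g_i(t))-O^*(t)|}{O^*(t)}\le\beta$, $\angle V_s(t)=0$, $v^l_i\le|V_i(t)|\le v^u_i$, $S^{gl}_i\le S^g_i(t)\le S^{gu}_i$,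 $S^g_i(t)-S^d_i(t)=\sum_{(i,j)\in E\cup E^R}S_{ij}(t)$, $-\theta^\Delta_{ij}\le\angle(V_i(t)V_j^*(t))\le\theta^\Delta_{ij}$, $|S_{ij}(t)|\le s^u_{ij}$, $S_{ij}(t)=\dot Y^*_{ij}|V_i(t)|^2-\dot Y^*_{ij}V_i(t)V_j^*(t)$. Output: for each $t$, $\dot{\mathcal N}_t$ equal to $\mathcal N_t$ with admittances replaced by $\dot Y$. *)

theory Defs
  imports "HOL-Probability.Probability"
begin

text \<open>Buses have type 'n, directed lines have type 'e (line e goes from bus
  fr e to bus to e; its reversal is the line from to e to fr e).\<close>

record ('n, 'e) grid =
  fr     :: "'e \<Rightarrow> 'n"
  to     :: "'e \<Rightarrow> 'n"
  vlo    :: "'n \<Rightarrow> real"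
  vup    :: "'n \<Rightarrow> real"
  sglo   :: "'n \<Rightarrow> complex"
  sgup   :: "'n \<Rightarrow> complex"
  thmax  :: "'e \<Rightarrow> real"
  smax   :: "'e \<Rightarrow> real"
  cc0    :: "'n \<Rightarrow> real"
  cc1    :: "'n \<Rightarrow> real"
  cc2    :: "'n \<Rightarrow> real"
  slack  :: "'n"

text \<open>Componentwise order on complex powers (bounds on active and reactive power).\<close>
definition cle :: "complex \<Rightarrow> complex \<Rightarrow> bool" where
  "cle z w \<longleftrightarrow> Re z \<le> Re w \<and> Im z \<le> Im w"

definition gen_cost :: "('n, 'e) grid \<Rightarrow> 'n \<Rightarrow> complex \<Rightarrow> real" where
  "gen_cost G i S = cc2 G i * (Re S)\<^sup>2 + cc1 G i * Re S + cc0 G i"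

definition line_flow :: "complex \<Rightarrow> complex \<Rightarrow> complex \<Rightarrow> complex" where
  "line_flow Y Vi Vj = cnj Y * (complex_of_real (cmod Vi))\<^sup>2 - cnj Y * Vi * cnj Vj"

text \<open>AC-OPF constraints at one time step with demand Sd, optimal cost Os,
  admittances Y, generation Sg, voltages V, forward flows Sf (on E) and
  reverse flows Sr (on E^R).\<close>
definition opf_feasible ::
  "('n::finite, 'e::finite) grid \<Rightarrow> ('n \<Rightarrow> complex) \<Rightarrow> real \<Rightarrow> real \<Rightarrow> complex^'e
    \<Rightarrow> ('n \<Rightarrow> complex) \<Rightarrow> ('n \<Rightarrow> complex) \<Rightarrow> ('e \<Rightarrow> complex) \<Rightarrow> ('e \<Rightarrow> complex) \<Rightarrow> bool" where
  "opf_feasible G Sd Os \<beta> Y Sg V Sf Sr \<longleftrightarrow>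
     \<bar>(\<Sum>i\<in>UNIV. gen_cost G i (Sg i)) - Os\<bar> / Os \<le> \<beta> \<and>
     Arg (V (slack G)) = 0 \<and>
     (\<forall>i. vlo G i \<le> cmod (V i) \<and> cmod (V i) \<le> vup G i) \<and>
     (\<forall>i. cle (sglo G i) (Sg i) \<and> cle (Sg i) (sgup G i)) \<and>
     (\<forall>i. Sg i - Sd i = (\<Sum>e\<in>{e. fr G e = i}. Sf e) + (\<Sum>e\<in>{e. to G e = i}. Sr e)) \<and>
     (\<forall>e. - thmax G e \<le> Arg (V (fr G e) * cnj (V (to G e))) \<and>
          Arg (V (fr G e) * cnj (V (to G e))) \<le> thmax G e \<and>
          - thmax G e \<le> Arg (V (to G e) * cnj (V (fr G e))) \<and>
          Arg (V (to G e) * cnj (V (fr G e))) \<le> thmax G e) \<and>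
     (\<forall>e. cmod (Sf e) \<le> smax G e \<and> cmod (Sr e) \<le> smax G e) \<and>
     (\<forall>e. Sf e = line_flow (Y $ e) (V (fr G e)) (V (to G e)) \<and>
          Sr e = line_flow (Y $ e) (V (to G e)) (V (fr G e)))"

definition mplo_feasible ::
  "('n::finite, 'e::finite) grid \<Rightarrow> ('e \<Rightarrow> 'v::finite) \<Rightarrow> nat \<Rightarrow> (nat \<Rightarrow> 'n \<Rightarrow> complex)
    \<Rightarrow> (nat \<Rightarrow> real) \<Rightarrow> real \<Rightarrow> real \<Rightarrow> real^'v \<Rightarrow> real^'v \<Rightarrow> complex^'e \<Rightarrow> bool" where
  "mplo_feasible G lev h Sd Os \<beta> lam mg mb Y \<longleftrightarrow>
     (\<forall>e. mg $ lev e / lam \<le> Re (Y $ e) \<and> Re (Y $ e) \<le> lam * mg $ lev e \<and>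
          mb $ lev e / lam \<le> Im (Y $ e) \<and> Im (Y $ e) \<le> lam * mb $ lev e) \<and>
     (\<forall>t\<in>{1..h}. \<exists>Sg V Sf Sr. opf_feasible G (Sd t) (Os t) \<beta> Y Sg V Sf Sr)"

definition mplo_obj :: "real^'e \<Rightarrow> real^'e \<Rightarrow> complex^'e \<Rightarrow> real" where
  "mplo_obj gt bt Y = (\<Sum>e\<in>UNIV. (Re (Y $ e) - gt $ e)\<^sup>2 + (Im (Y $ e) - bt $ e)\<^sup>2)"

definition mplo_optimal ::
  "('n::finite, 'e::finite) grid \<Rightarrow> ('e \<Rightarrow> 'v::finite) \<Rightarrow> nat \<Rightarrow> (nat \<Rightarrow> 'n \<Rightarrow> complex)
    \<Rightarrow> (nat \<Rightarrow> real) \<Rightarrow> real \<Rightarrow> real \<Rightarrow> real^'e \<Rightarrow> real^'e \<Rightarrow> real^'v \<Rightarrow> real^'v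
    \<Rightarrow> complex^'e \<Rightarrow> bool" where
  "mplo_optimal G lev h Sd Os \<beta> lam gt bt mg mb Y \<longleftrightarrow>
     mplo_feasible G lev h Sd Os \<beta> lam mg mb Y \<and>
     (\<forall>Y'. mplo_feasible G lev h Sd Os \<beta> lam mg mb Y' \<longrightarrow> mplo_obj gt bt Y \<le> mplo_obj gt bt Y')"

definition lap_density :: "real \<Rightarrow> real \<Rightarrow> real" where
  "lap_density l x = exp (- \<bar>x\<bar> / l) / (2 * l)"

definition level_size :: "('e::finite \<Rightarrow> 'v) \<Rightarrow> 'v \<Rightarrow> nat" where
  "level_size lev v = card {e. lev e = v}"

definition level_mean :: "('e::finite \<Rightarrow> 'v::finite) \<Rightarrow> real^'e \<Rightarrow> real^'v" where
  "level_mean lev x = (\<chi> v. (\<Sum>e\<in>{e. lev e = v}. x $ e) / real (level_size lev v))"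

definition mplo_noise :: "real \<Rightarrow> real \<Rightarrow> ('e::finite \<Rightarrow> 'v::finite)
    \<Rightarrow> ((real^'e) \<times> (real^'v) \<times> (real^'v)) measure" where
  "mplo_noise \<alpha> \<epsilon> lev = density lborel (\<lambda>(x, y, z). ennreal (
      (\<Prod>e\<in>UNIV. lap_density (3 * \<alpha> / \<epsilon>) (x $ e)) *
      (\<Prod>v\<in>UNIV. lap_density (3 * \<alpha> / (real (level_size lev v) * \<epsilon>)) (y $ v)) *
      (\<Prod>v\<in>UNIV. lap_density (3 * \<alpha> / (real (level_size lev v) * \<epsilon>)) (z $ v))))"

text \<open>The MPLO mechanism on private data D = (g, b); sel is the fixed rule selecting
  (the admittance part of) a solution of step 4 from (g~, b~, mu~_g, mu~_b).
  The output is the vector of released admittances Y-dot (the rest of every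
  released network is public).\<close>
definition mplo_mech :: "real \<Rightarrow> real \<Rightarrow> ('e \<Rightarrow> real) \<Rightarrow> ('e::finite \<Rightarrow> 'v::finite)
    \<Rightarrow> (real^'e \<Rightarrow> real^'e \<Rightarrow> real^'v \<Rightarrow> real^'v \<Rightarrow> complex^'e)
    \<Rightarrow> (real^'e) \<times> (real^'e) \<Rightarrow> (complex^'e) measure" where
  "mplo_mech \<alpha> \<epsilon> r lev sel D =
     distr (mplo_noise \<alpha> \<epsilon> lev) borel
       (\<lambda>(x, y, z). sel (fst D + x) (\<chi> e. r e * (fst D + x) $ e)
                       (level_mean lev (fst D) + y) (level_mean lev (snd D) + z))"

definition alpha_adjacent :: "real \<Rightarrow> (real^'e) \<times> (real^'e) \<Rightarrow> (real^'e) \<times> (real^'e) \<Rightarrow> bool" where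
  "alpha_adjacent \<alpha> D D' \<longleftrightarrow>
     (\<exists>e. (\<forall>e'. e' \<noteq> e \<longrightarrow> fst D $ e' = fst D' $ e' \<and> snd D $ e' = snd D' $ e') \<and>
          \<bar>fst D $ e - fst D' $ e\<bar> \<le> \<alpha> \<and> \<bar>snd D $ e - snd D' $ e\<bar> \<le> \<alpha>)"

definition differentially_private :: "real \<Rightarrow> ('d \<Rightarrow> 'd \<Rightarrow> bool) \<Rightarrow> ('d \<Rightarrow> 'o measure) \<Rightarrow> bool" where
  "differentially_private \<epsilon> adj M \<longleftrightarrow>
     (\<forall>D D'. adj D D' \<longrightarrow>
        (\<forall>A\<in>sets (M D). measure (M D) A \<le> exp \<epsilon> * measure (M D') A))"

end

theory Submission
  imports Defs
begin

(* MPLO is post-processing of a Laplace mechanism releasing the statistics (g, mu_g, mu_b):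
  b~ is computed from g~, and step 4 sees the data only through (g~, b~, mu~_g, mu~_b).
  Changing one line by at most alpha moves g by at most alpha in one coordinate and the
  level means by at most alpha/n_v in the level of that line, so each of the three noise
  vectors costs at most eps/3: the noise density centred at the statistics of D is pointwise
  at most exp eps times the one centred at the statistics of D'. Translation invariance of
  Lebesgue measure carries this bound to every event of the output. Neither the optimality
  of the selection rule nor the network data play any role. *)

lemma lap_density_nonneg: "l > 0 \<Longrightarrow> 0 \<le> lap_density l x"
  unfolding lap_density_def by simp

lemma lap_density_translate_le:
  assumes "l > 0"
  shows "lap_density l (s - a) \<le> exp (\<bar>a - a'\<bar> / l) * lap_density l (s - a')"
proof -
  have "- \<bar>s - a\<bar> / l \<le> \<bar>a - a'\<bar> / l + - \<bar>s - a'\<bar> / l"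
    using assms by (simp add: divide_simps)
  then have "exp (- \<bar>s - a\<bar> / l) \<le> exp (\<bar>a - a'\<bar> / l) * exp (- \<bar>s - a'\<bar> / l)"
    by (simp add: exp_add[symmetric])
  then show ?thesis
    using assms unfolding lap_density_def by (simp add: divide_right_mono)
qed

definition lap_density_prod :: "('i::finite \<Rightarrow> real) \<Rightarrow> real^'i \<Rightarrow> real" where
  "lap_density_prod l x = (\<Prod>i\<in>UNIV. lap_density (l i) (x $ i))"

lemma lap_density_prod_nonneg: "(\<And>i. l i > 0) \<Longrightarrow> 0 \<le> lap_density_prod l x"
  unfolding lap_density_prod_def by (intro prod_nonneg lap_density_nonneg) auto

lemma lap_density_prod_translate_le:
  assumes pos: "\<And>i. l i > 0" and sens: "(\<Sum>i\<in>UNIV. \<bar>a $ i - a' $ i\<bar> / l i) \<le> B"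
  shows "lap_density_prod l (u - a) \<le> exp B * lap_density_prod l (u - a')"
proof -
  have "lap_density_prod l (u - a)
      \<le> (\<Prod>i\<in>UNIV. exp (\<bar>a $ i - a' $ i\<bar> / l i) * lap_density (l i) (u $ i - a' $ i))"
    unfolding lap_density_prod_def
    by (intro prod_mono) (simp add: pos lap_density_nonneg lap_density_translate_le)
  also have "\<dots> = exp (\<Sum>i\<in>UNIV. \<bar>a $ i - a' $ i\<bar> / l i) * lap_density_prod l (u - a')"
    by (simp add: lap_density_prod_def exp_sum prod.distrib)
  also have "\<dots> \<le> exp B * lap_density_prod l (u - a')"
    using sens by (intro mult_right_mono lap_density_prod_nonneg pos) auto
  finally show ?thesis .
qed

lemma sum_abs_diff_single_coordinate:
  fixes x x' :: "real^'i::finite"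
  assumes "\<And>i. i \<noteq> i0 \<Longrightarrow> x $ i = x' $ i"
  shows "(\<Sum>i\<in>UNIV. \<bar>x $ i - x' $ i\<bar>) = \<bar>x $ i0 - x' $ i0\<bar>"
  using assms by (subst sum.mono_neutral_right[of UNIV "{i0}"]) auto

lemma sum_level_size_mean_diff_single_coordinate:
  fixes x x' :: "real^'e::finite" and lev :: "'e \<Rightarrow> 'v::finite"
  assumes "\<And>e. e \<noteq> e0 \<Longrightarrow> x $ e = x' $ e"
  shows "(\<Sum>v\<in>UNIV. real (level_size lev v) * \<bar>level_mean lev x $ v - level_mean lev x' $ v\<bar>)
    = \<bar>x $ e0 - x' $ e0\<bar>"
proof -
  have level_sum: "(\<Sum>e\<in>{e. lev e = v}. x $ e - x' $ e)
      = (if v = lev e0 then x $ e0 - x' $ e0 else 0)" for v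
    using assms by (subst sum.mono_neutral_right[of _ "{e. lev e = v} \<inter> {e0}"]) auto
  have "real (level_size lev v) * \<bar>level_mean lev x $ v - level_mean lev x' $ v\<bar>
      = \<bar>\<Sum>e\<in>{e. lev e = v}. x $ e - x' $ e\<bar>" for v
  proof (cases "level_size lev v = 0")
    case True
    then have "{e. lev e = v} = {}" by (simp add: level_size_def)
    then show ?thesis by (simp add: True)
  next
    case False
    then show ?thesis
      by (simp add: level_mean_def sum_subtractf diff_divide_distrib[symmetric] abs_divide)
  qed
  then show ?thesis
    by (simp add: level_sum if_distrib[of abs] cong: if_cong)
qed

lemma single_coordinate_sensitivity:
  fixes x x' :: "real^'i::finite"
  assumes "\<And>i. i \<noteq> i0 \<Longrightarrow> x $ i = x' $ i" and "\<bar>x $ i0 - x' $ i0\<bar> \<le> \<alpha>"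
    and "\<alpha> > 0" and "\<epsilon> > 0"
  shows "(\<Sum>i\<in>UNIV. \<bar>x $ i - x' $ i\<bar> / (3 * \<alpha> / \<epsilon>)) \<le> \<epsilon> / 3"
proof -
  have "(\<Sum>i\<in>UNIV. \<bar>x $ i - x' $ i\<bar> / (3 * \<alpha> / \<epsilon>))
      = (\<Sum>i\<in>UNIV. \<bar>x $ i - x' $ i\<bar>) / (3 * \<alpha> / \<epsilon>)"
    by (rule sum_divide_distrib[symmetric])
  also have "\<dots> = \<bar>x $ i0 - x' $ i0\<bar> / (3 * \<alpha> / \<epsilon>)"
    using assms(1) by (simp add: sum_abs_diff_single_coordinate)
  also have "\<dots> \<le> \<alpha> / (3 * \<alpha> / \<epsilon>)"
    using assms by (intro divide_right_mono) auto
  finally show ?thesis using assms by simp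
qed

lemma level_mean_sensitivity:
  fixes x x' :: "real^'e::finite" and lev :: "'e \<Rightarrow> 'v::finite"
  assumes "\<And>e. e \<noteq> e0 \<Longrightarrow> x $ e = x' $ e" and "\<bar>x $ e0 - x' $ e0\<bar> \<le> \<alpha>"
    and "\<alpha> > 0" and "\<epsilon> > 0"
  shows "(\<Sum>v\<in>UNIV. \<bar>level_mean lev x $ v - level_mean lev x' $ v\<bar>
            / (3 * \<alpha> / (real (level_size lev v) * \<epsilon>))) \<le> \<epsilon> / 3"
proof -
  have "(\<Sum>v\<in>UNIV. \<bar>level_mean lev x $ v - level_mean lev x' $ v\<bar>
            / (3 * \<alpha> / (real (level_size lev v) * \<epsilon>)))
      = (\<Sum>v\<in>UNIV. real (level_size lev v) * \<bar>level_mean lev x $ v - level_mean lev x' $ v\<bar>)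
          / (3 * \<alpha> / \<epsilon>)"
    by (subst sum_divide_distrib) (simp add: ac_simps)
  also have "\<dots> = \<bar>x $ e0 - x' $ e0\<bar> / (3 * \<alpha> / \<epsilon>)"
    using assms(1) by (simp add: sum_level_size_mean_diff_single_coordinate)
  also have "\<dots> \<le> \<alpha> / (3 * \<alpha> / \<epsilon>)"
    using assms by (intro divide_right_mono) auto
  finally show ?thesis using assms by simp
qed

lemma level_size_pos: "surj lev \<Longrightarrow> level_size (lev :: 'e::finite \<Rightarrow> 'v) v > 0"
  unfolding level_size_def by (metis (mono_tags, lifting) card_gt_0_iff empty_Collect_eq finite surjD)

lemma alpha_adjacent_sym: "alpha_adjacent \<alpha> D D' \<Longrightarrow> alpha_adjacent \<alpha> D' D"
  unfolding alpha_adjacent_def by (metis abs_minus_commute)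

lemma emeasure_distr_translated_density:
  fixes f :: "'a::euclidean_space \<Rightarrow> real"
  assumes f: "f \<in> borel_measurable borel" and S: "S \<in> borel_measurable borel" and A: "A \<in> sets borel"
  shows "emeasure (distr (density lborel (\<lambda>w. ennreal (f w))) borel (\<lambda>w. S (a + w))) A
    = (\<integral>\<^sup>+ u. ennreal (f (u - a)) * indicator (S -` A) u \<partial>lborel)"
proof -
  have SA: "S -` A \<in> sets borel"
    using measurable_sets[OF S A] by simp
  have "emeasure (distr (density lborel (\<lambda>w. ennreal (f w))) borel (\<lambda>w. S (a + w))) A
      = emeasure (density lborel (\<lambda>w. ennreal (f w))) ((\<lambda>w. a + w) -` S -` A)"
    using S A by (subst emeasure_distr) (auto simp: vimage_def)
  also have "\<dots> = (\<integral>\<^sup>+ w. ennreal (f w) * indicator (S -` A) (a + w) \<partial>lborel)"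
  proof -
    have "(\<lambda>w. a + w) \<in> borel_measurable borel" by measurable
    from measurable_sets[OF this SA] have "(\<lambda>w. a + w) -` S -` A \<in> sets borel" by simp
    then show ?thesis
      using f by (subst emeasure_density) (auto simp: indicator_def)
  qed
  also have "\<dots> = (\<integral>\<^sup>+ u. ennreal (f (u - a)) * indicator (S -` A) u \<partial>distr lborel borel ((+) a))"
    using f SA by (subst nn_integral_distr) auto
  also have "\<dots> = (\<integral>\<^sup>+ u. ennreal (f (u - a)) * indicator (S -` A) u \<partial>lborel)"
    by (simp add: lborel_distr_plus)
  finally show ?thesis .
qed

lemma emeasure_distr_translated_density_le:
  fixes f :: "'a::euclidean_space \<Rightarrow> real"
  assumes f: "f \<in> borel_measurable borel" and S: "S \<in> borel_measurable borel" and A: "A \<in> sets borel"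
    and c: "c \<ge> 0" and ratio: "\<And>u. f (u - a) \<le> c * f (u - a')"
  shows "emeasure (distr (density lborel (\<lambda>w. ennreal (f w))) borel (\<lambda>w. S (a + w))) A
    \<le> ennreal c * emeasure (distr (density lborel (\<lambda>w. ennreal (f w))) borel (\<lambda>w. S (a' + w))) A"
proof -
  have SA: "S -` A \<in> sets borel"
    using measurable_sets[OF S A] by simp
  have "(\<integral>\<^sup>+ u. ennreal (f (u - a)) * indicator (S -` A) u \<partial>lborel)
      \<le> (\<integral>\<^sup>+ u. ennreal c * (ennreal (f (u - a')) * indicator (S -` A) u) \<partial>lborel)"
    using ratio c
    by (intro nn_integral_mono) (auto simp: indicator_def ennreal_mult'[symmetric] ennreal_leI)
  also have "\<dots> = ennreal c * (\<integral>\<^sup>+ u. ennreal (f (u - a')) * indicator (S -` A) u \<partial>lborel)"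
    using f SA by (intro nn_integral_cmult) auto
  finally show ?thesis
    by (simp only: emeasure_distr_translated_density[OF f S A])
qed

text \<open>Symmetry of adj is needed because measure is 0 on sets of infinite emeasure: the reverse
  bound rules out that M D' A is infinite while M D A is finite.\<close>
lemma differentially_privateI_emeasure:
  assumes sym: "\<And>D D'. adj D D' \<Longrightarrow> adj D' D"
    and sets_eq: "\<And>D D'. sets (M D) = sets (M D')"
    and le: "\<And>D D' A. adj D D' \<Longrightarrow> A \<in> sets (M D) \<Longrightarrow>
               emeasure (M D) A \<le> ennreal (exp \<epsilon>) * emeasure (M D') A"
  shows "differentially_private \<epsilon> adj M"
  unfolding differentially_private_def
proof (intro allI impI ballI)
  fix D D' A
  assume adj: "adj D D'" and A: "A \<in> sets (M D)"
  have le1: "emeasure (M D) A \<le> ennreal (exp \<epsilon>) * emeasure (M D') A"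
    using adj A by (rule le)
  have le2: "emeasure (M D') A \<le> ennreal (exp \<epsilon>) * emeasure (M D) A"
    using sym[OF adj] A sets_eq by (intro le) auto
  show "measure (M D) A \<le> exp \<epsilon> * measure (M D') A"
  proof (cases "emeasure (M D') A = top")
    case True
    then have "emeasure (M D) A = top"
      using le2 by (auto simp: ennreal_mult_eq_top_iff top_unique)
    then show ?thesis using True by (simp add: measure_def)
  next
    case False
    then have "ennreal (exp \<epsilon>) * emeasure (M D') A < top"
      by (simp add: ennreal_mult_less_top top.not_eq_extremum)
    then have "enn2real (emeasure (M D) A) \<le> enn2real (ennreal (exp \<epsilon>) * emeasure (M D') A)"
      using le1 by (rule enn2real_mono[rotated])
    then show ?thesis by (simp add: measure_def enn2real_mult)
  qed
qed

definition mplo_statistics ::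
  "('e::finite \<Rightarrow> 'v::finite) \<Rightarrow> (real^'e) \<times> (real^'e) \<Rightarrow> (real^'e) \<times> (real^'v) \<times> (real^'v)" where
  "mplo_statistics lev D = (fst D, level_mean lev (fst D), level_mean lev (snd D))"

definition mplo_noise_density ::
  "real \<Rightarrow> real \<Rightarrow> ('e::finite \<Rightarrow> 'v::finite) \<Rightarrow> (real^'e) \<times> (real^'v) \<times> (real^'v) \<Rightarrow> real" where
  "mplo_noise_density \<alpha> \<epsilon> lev = (\<lambda>(x, y, z).
     lap_density_prod (\<lambda>_. 3 * \<alpha> / \<epsilon>) x *
     lap_density_prod (\<lambda>v. 3 * \<alpha> / (real (level_size lev v) * \<epsilon>)) y *
     lap_density_prod (\<lambda>v. 3 * \<alpha> / (real (level_size lev v) * \<epsilon>)) z)"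

definition mplo_postprocess ::
  "('e::finite \<Rightarrow> real) \<Rightarrow> (real^'e \<Rightarrow> real^'e \<Rightarrow> real^'v \<Rightarrow> real^'v \<Rightarrow> complex^'e)
    \<Rightarrow> (real^'e) \<times> (real^'v) \<times> (real^'v) \<Rightarrow> complex^'e" where
  "mplo_postprocess r sel = (\<lambda>(g, mg, mb). sel g (\<chi> e. r e * g $ e) mg mb)"

lemma mplo_mech_eq_translated_noise:
  "mplo_mech \<alpha> \<epsilon> r lev sel D =
     distr (density lborel (\<lambda>w. ennreal (mplo_noise_density \<alpha> \<epsilon> lev w))) borel
       (\<lambda>w. mplo_postprocess r sel (mplo_statistics lev D + w))"
proof -
  have "(\<lambda>(x, y, z). ennreal (
      (\<Prod>e\<in>UNIV. lap_density (3 * \<alpha> / \<epsilon>) (x $ e)) *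
      (\<Prod>v\<in>UNIV. lap_density (3 * \<alpha> / (real (level_size lev v) * \<epsilon>)) (y $ v)) *
      (\<Prod>v\<in>UNIV. lap_density (3 * \<alpha> / (real (level_size lev v) * \<epsilon>)) (z $ v))))
    = (\<lambda>w. ennreal (mplo_noise_density \<alpha> \<epsilon> lev w))"
    by (simp add: fun_eq_iff mplo_noise_density_def lap_density_prod_def)
  moreover have "(\<lambda>(x, y, z). sel (fst D + x) (\<chi> e. r e * (fst D + x) $ e)
        (level_mean lev (fst D) + y) (level_mean lev (snd D) + z))
    = (\<lambda>w. mplo_postprocess r sel (mplo_statistics lev D + w))"
    by (simp add: fun_eq_iff mplo_postprocess_def mplo_statistics_def)
  ultimately show ?thesis
    unfolding mplo_mech_def mplo_noise_def by simp
qed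

lemma borel_measurable_mplo_noise_density:
  "mplo_noise_density \<alpha> \<epsilon> lev \<in> borel_measurable borel"
  unfolding mplo_noise_density_def lap_density_prod_def lap_density_def divide_inverse split_beta'
  by (intro borel_measurable_continuous_onI continuous_intros)

lemma borel_measurable_mplo_postprocess:
  fixes sel :: "real^'e::finite \<Rightarrow> real^'e \<Rightarrow> real^'v::finite \<Rightarrow> real^'v \<Rightarrow> complex^'e"
  assumes "(\<lambda>(gt, bt, mg, mb). sel gt bt mg mb) \<in> borel_measurable borel"
  shows "mplo_postprocess r sel \<in> borel_measurable borel"
proof -
  have "(\<lambda>(g, mg, mb). (g, (\<chi> e. r e * g $ e), mg, mb))
      \<in> borel_measurable (borel :: ((real^'e) \<times> (real^'v) \<times> (real^'v)) measure)"
    unfolding split_beta' by (intro borel_measurable_continuous_onI continuous_intros)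
  from measurable_compose[OF this assms] show ?thesis
    by (simp add: mplo_postprocess_def o_def split_beta')
qed

lemma mplo_noise_density_translate_le:
  fixes lev :: "'e::finite \<Rightarrow> 'v::finite"
  assumes "\<alpha> > 0" and "\<epsilon> > 0" and "surj lev" and "alpha_adjacent \<alpha> D D'"
  shows "mplo_noise_density \<alpha> \<epsilon> lev (u - mplo_statistics lev D)
    \<le> exp \<epsilon> * mplo_noise_density \<alpha> \<epsilon> lev (u - mplo_statistics lev D')"
proof -
  obtain e0 where agree: "\<And>e. e \<noteq> e0 \<Longrightarrow> fst D $ e = fst D' $ e \<and> snd D $ e = snd D' $ e"
    and g: "\<bar>fst D $ e0 - fst D' $ e0\<bar> \<le> \<alpha>" and b: "\<bar>snd D $ e0 - snd D' $ e0\<bar> \<le> \<alpha>"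
    using assms(4) unfolding alpha_adjacent_def by blast
  define c where "c = (\<lambda>_::'e. 3 * \<alpha> / \<epsilon>)"
  define d where "d = (\<lambda>v. 3 * \<alpha> / (real (level_size lev v) * \<epsilon>))"
  have c_pos: "\<And>e. c e > 0" and d_pos: "\<And>v. d v > 0"
    using assms level_size_pos[OF assms(3)] by (simp_all add: c_def d_def)
  obtain x y z where u: "u = (x, y, z)" by (cases u)
  have g_factor: "lap_density_prod c (x - fst D)
      \<le> exp (\<epsilon> / 3) * lap_density_prod c (x - fst D')"
    using agree g assms c_pos unfolding c_def
    by (intro lap_density_prod_translate_le single_coordinate_sensitivity[of e0]) auto
  have mean_g_factor: "lap_density_prod d (y - level_mean lev (fst D))
      \<le> exp (\<epsilon> / 3) * lap_density_prod d (y - level_mean lev (fst D'))"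
    using agree g assms d_pos unfolding d_def
    by (intro lap_density_prod_translate_le level_mean_sensitivity[of e0]) auto
  have mean_b_factor: "lap_density_prod d (z - level_mean lev (snd D))
      \<le> exp (\<epsilon> / 3) * lap_density_prod d (z - level_mean lev (snd D'))"
    using agree b assms d_pos unfolding d_def
    by (intro lap_density_prod_translate_le level_mean_sensitivity[of e0]) auto
  have "mplo_noise_density \<alpha> \<epsilon> lev (u - mplo_statistics lev D)
      = lap_density_prod c (x - fst D) * lap_density_prod d (y - level_mean lev (fst D))
          * lap_density_prod d (z - level_mean lev (snd D))"
    by (simp add: u mplo_noise_density_def mplo_statistics_def c_def d_def)
  also have "\<dots> \<le> (exp (\<epsilon> / 3) * lap_density_prod c (x - fst D'))
      * (exp (\<epsilon> / 3) * lap_density_prod d (y - level_mean lev (fst D')))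
      * (exp (\<epsilon> / 3) * lap_density_prod d (z - level_mean lev (snd D')))"
    using g_factor mean_g_factor mean_b_factor c_pos d_pos by (intro mult_mono mult_nonneg_nonneg lap_density_prod_nonneg) auto
  also have "\<dots> = exp \<epsilon> * mplo_noise_density \<alpha> \<epsilon> lev (u - mplo_statistics lev D')"
    by (simp add: u mplo_noise_density_def mplo_statistics_def c_def d_def mult_exp_exp)
  finally show ?thesis .
qed

theorem theorem5:
  fixes G :: "('n::finite, 'e::finite) grid"
    and lev :: "'e \<Rightarrow> 'v::finite"
    and r :: "'e \<Rightarrow> real"
    and h :: nat
    and Sd :: "nat \<Rightarrow> 'n \<Rightarrow> complex"
    and Os :: "nat \<Rightarrow> real"
    and \<alpha> \<epsilon> \<beta> lam :: real
    and sel :: "real^'e \<Rightarrow> real^'e \<Rightarrow> real^'v \<Rightarrow> real^'v \<Rightarrow> complex^'e"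
  assumes "\<alpha> > 0" and "\<epsilon> > 0" and "\<beta> > 0" and "lam > 0"
    and "surj lev"
    and "\<forall>t\<in>{1..h}. Os t > 0"
    and "\<forall>gt bt mg mb. (\<exists>Y. mplo_optimal G lev h Sd Os \<beta> lam gt bt mg mb Y) \<longrightarrow>
            mplo_optimal G lev h Sd Os \<beta> lam gt bt mg mb (sel gt bt mg mb)"
    and "(\<lambda>(gt, bt, mg, mb). sel gt bt mg mb) \<in> borel_measurable borel"
  shows "differentially_private \<epsilon> (alpha_adjacent \<alpha>) (mplo_mech \<alpha> \<epsilon> r lev sel)"
proof (rule differentially_privateI_emeasure)
  show "alpha_adjacent \<alpha> D' D" if "alpha_adjacent \<alpha> D D'" for D D' :: "(real^'e) \<times> (real^'e)"
    using that by (rule alpha_adjacent_sym)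
  show "sets (mplo_mech \<alpha> \<epsilon> r lev sel D) = sets (mplo_mech \<alpha> \<epsilon> r lev sel D')" for D D'
    by (simp add: mplo_mech_def)
  fix D D' A
  assume "alpha_adjacent \<alpha> D D'" and "A \<in> sets (mplo_mech \<alpha> \<epsilon> r lev sel D)"
  then show "emeasure (mplo_mech \<alpha> \<epsilon> r lev sel D) A
      \<le> ennreal (exp \<epsilon>) * emeasure (mplo_mech \<alpha> \<epsilon> r lev sel D') A"
    unfolding mplo_mech_eq_translated_noise
    by (intro emeasure_distr_translated_density_le borel_measurable_mplo_noise_density
        borel_measurable_mplo_postprocess mplo_noise_density_translate_le) (use assms in auto)
qed

end
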